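(* Let $w \in S_n$ with Lehmer code $L(w) = (L_1,\dots,L_n)$. If there is an index $i$ with $L_i - L_{i+1} \ge 2$, then the Schubert polynomial $\mathfrak{S}_w$ is not a standard elementary monomial.
   Context: The Lehmer code of $w$ is given by $L_i = |\{j > i : w(j) < w(i)\}|$. $e^i_j$ is the elementary symmetric polynomial of degree $j$ in $x_1,\dots,x_i$; a standard elementary monomial is a product $e^1_{a_1}e^2_{a_2}\cdots$ with nonnegative integers $a_i$, finitely many nonzero. Schubert polynomials: $\mathfrak{S}_{w_0} = x_1^{n-1}\cdots x_{n-1}$ for the longest $w_0 \in S_n$, and $\partial_i\mathfrak{S}_w = \mathfrak{S}_{ws_i}$ if $\ell(ws_i)=\ell(w)-1$, $0$ otherwise, where $\partial_i f = (f-s_if)/(x_i-x_{i+1})$. *)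

theory Defs
  imports "HOL-Library.Poly_Mapping" "HOL-Combinatorics.Permutations" "HOL-Combinatorics.Transposition"
begin

text \<open>Polynomials with integer coefficients in the variables x_1, x_2, ...
  (variable x_i is indexed by the natural number i; index 0 is unused).
  A monomial is a finitely supported exponent vector.\<close>
type_synonym mpoly = "(nat \<Rightarrow>\<^sub>0 nat) \<Rightarrow>\<^sub>0 int"

definition Var :: "nat \<Rightarrow> mpoly" where
  "Var i = Poly_Mapping.single (Poly_Mapping.single i 1) 1"

definition mswap :: "nat \<Rightarrow> (nat \<Rightarrow>\<^sub>0 nat) \<Rightarrow> (nat \<Rightarrow>\<^sub>0 nat)" where
  "mswap i m = Poly_Mapping.map_key (transpose i (Suc i)) m"

definition sswap :: "nat \<Rightarrow> mpoly \<Rightarrow> mpoly" where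
  "sswap i p = (\<Sum>m\<in>Poly_Mapping.keys p. Poly_Mapping.single (mswap i m) (Poly_Mapping.lookup p m))"

definition ddiff :: "nat \<Rightarrow> mpoly \<Rightarrow> mpoly" where
  "ddiff i f = (THE q. (Var i - Var (Suc i)) * q = f - sswap i f)"

text \<open>Permutations in S_n are permutations of {1..n}.\<close>
definition perm_length :: "nat \<Rightarrow> (nat \<Rightarrow> nat) \<Rightarrow> nat" where
  "perm_length n w = card {(i, j). 1 \<le> i \<and> i < j \<and> j \<le> n \<and> w j < w i}"

definition lehmer :: "nat \<Rightarrow> (nat \<Rightarrow> nat) \<Rightarrow> nat \<Rightarrow> nat" where
  "lehmer n w i = card {j. i < j \<and> j \<le> n \<and> w j < w i}"

definition longest :: "nat \<Rightarrow> nat \<Rightarrow> nat" where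
  "longest n i = (if 1 \<le> i \<and> i \<le> n then n + 1 - i else i)"

definition schubert_family :: "nat \<Rightarrow> ((nat \<Rightarrow> nat) \<Rightarrow> mpoly) \<Rightarrow> bool" where
  "schubert_family n S \<longleftrightarrow>
     S (longest n) = (\<Prod>i\<in>{1..n}. Var i ^ (n - i)) \<and>
     (\<forall>w i. w permutes {1..n} \<longrightarrow> 1 \<le> i \<longrightarrow> i < n \<longrightarrow>
        ddiff i (S w) =
          (if perm_length n (w \<circ> transpose i (Suc i)) + 1 = perm_length n w
           then S (w \<circ> transpose i (Suc i)) else 0))"

definition schubert :: "nat \<Rightarrow> (nat \<Rightarrow> nat) \<Rightarrow> mpoly" where
  "schubert n w = (THE p. \<exists>S. schubert_family n S \<and> S w = p)"

definition elem :: "nat \<Rightarrow> nat \<Rightarrow> mpoly" where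
  "elem i j = (\<Sum>T\<in>{T. T \<subseteq> {1..i} \<and> card T = j}. \<Prod>t\<in>T. Var t)"

definition std_elem_monomial :: "mpoly \<Rightarrow> bool" where
  "std_elem_monomial p \<longleftrightarrow> (\<exists>(a :: nat \<Rightarrow> nat) k. p = (\<Prod>i\<in>{1..k}. elem i (a i)))"

end

theory Submission
  imports Defs
begin

text \<open>
  Compare exponent vectors lexicographically starting from the last variable. Then the leading
  monomial of \<open>\<SS>\<^sub>w\<close> is \<open>x\<^bsup>L(w)\<^esup>\<close>, with coefficient 1. This holds for the longest
  permutation, and if \<open>r\<close> is the last ascent of \<open>w\<close>, then \<open>\<SS>\<^sub>w = \<partial>\<^sub>r \<SS>\<^bsub>w s_r\<^esub>\<close>,
  where the exponents of the leading monomial of \<open>\<SS>\<^bsub>w s_r\<^esub>\<close> at the positions \<open>r\<close> and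
  beyond \<open>r + 1\<close> are as large as any exponent of a Schubert polynomial can be. This pins down
  the leading monomial of \<open>\<partial>\<^sub>r\<close> applied to it, and that monomial is \<open>x\<^bsup>L(w)\<^esup>\<close>.

  The leading monomial of \<open>e\<^sup>k\<^sub>j\<close> is \<open>x\<^bsub>k-j+1\<^esub> \<cdots> x\<^sub>k\<close>. So the exponent of \<open>x\<^sub>i\<close> in the leading
  monomial of \<open>\<Prod>\<^sub>k e\<^sup>k\<^bsub>a_k\<^esub>\<close> counts the intervals \<open>(k - a\<^sub>k, k]\<close> containing \<open>i\<close>.
  Every such interval, except one ending at \<open>i\<close>, also contains \<open>i + 1\<close>, so this count drops
  by at most one from \<open>i\<close> to \<open>i + 1\<close>.

  As \<open>schubert\<close> is a definite description, the defining conditions must first be shown to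
  have a solution: define \<open>\<SS>\<close> by recursion along the least ascent, and derive the recursion
  at every other ascent from the commutation and braid relations of divided differences.
\<close>

abbreviation monom :: "(nat \<Rightarrow>\<^sub>0 nat) \<Rightarrow> mpoly" where
  "monom m \<equiv> Poly_Mapping.single m 1"

abbreviation adj :: "nat \<Rightarrow> nat \<Rightarrow> nat" where
  "adj i \<equiv> transpose i (Suc i)"

section \<open>Swapping variables and divided differences\<close>

lemma lookup_mswap: "Poly_Mapping.lookup (mswap i m) k = Poly_Mapping.lookup m (adj i k)"
  by (simp add: mswap_def map_key.rep_eq inj_transpose)

lemma mswap_mswap [simp]: "mswap i (mswap i m) = m"
  by (rule poly_mapping_eqI) (simp add: lookup_mswap)

lemma mswap_add: "mswap i (a + b) = mswap i a + mswap i b"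
  by (rule poly_mapping_eqI) (simp add: lookup_mswap lookup_add)

lemma mswap_single: "mswap i (Poly_Mapping.single k e) = Poly_Mapping.single (adj i k) e"
  by (rule poly_mapping_eqI) (auto simp: lookup_mswap lookup_single when_def transpose_eq_iff)

lemma mswap_commute: "Suc (Suc i) \<le> j \<Longrightarrow> mswap i (mswap j m) = mswap j (mswap i m)"
  by (rule poly_mapping_eqI) (simp add: lookup_mswap transpose_def)

lemma mswap_braid: "mswap i (mswap (Suc i) (mswap i m)) = mswap (Suc i) (mswap i (mswap (Suc i) m))"
  by (rule poly_mapping_eqI) (simp add: lookup_mswap transpose_def)

lemma sum_single_lookup: "(\<Sum>m\<in>Poly_Mapping.keys p. Poly_Mapping.single m (Poly_Mapping.lookup p m)) = p"
proof (rule poly_mapping_eqI)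
  fix k
  have "Poly_Mapping.lookup (\<Sum>m\<in>Poly_Mapping.keys p. Poly_Mapping.single m (Poly_Mapping.lookup p m)) k
      = (\<Sum>m\<in>Poly_Mapping.keys p. if m = k then Poly_Mapping.lookup p m else 0)"
    by (simp add: lookup_sum lookup_single when_def)
  then show "Poly_Mapping.lookup (\<Sum>m\<in>Poly_Mapping.keys p. Poly_Mapping.single m (Poly_Mapping.lookup p m)) k
      = Poly_Mapping.lookup p k"
    by (simp add: in_keys_iff)
qed

lemma lookup_sswap: "Poly_Mapping.lookup (sswap i p) m = Poly_Mapping.lookup p (mswap i m)"
proof -
  have "Poly_Mapping.lookup (sswap i p) m =
      (\<Sum>x\<in>Poly_Mapping.keys p. if x = mswap i m then Poly_Mapping.lookup p x else 0)"
    unfolding sswap_def lookup_sum by (rule sum.cong) (auto simp: lookup_single when_def)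
  then show ?thesis
    by (simp add: in_keys_iff)
qed

lemma sswap_zero [simp]: "sswap i 0 = 0"
  by (simp add: sswap_def)

lemma sswap_diff: "sswap i (p - q) = sswap i p - sswap i q"
  by (rule poly_mapping_eqI) (simp add: lookup_sswap lookup_minus)

lemma sswap_sum: "sswap i (sum f A) = (\<Sum>a\<in>A. sswap i (f a))"
  by (rule poly_mapping_eqI) (simp add: lookup_sswap lookup_sum)

lemma sswap_single: "sswap i (Poly_Mapping.single m c) = Poly_Mapping.single (mswap i m) c"
  by (rule poly_mapping_eqI) (auto simp: lookup_sswap lookup_single when_def)

lemma sswap_sswap [simp]: "sswap i (sswap i p) = p"
  by (rule poly_mapping_eqI) (simp add: lookup_sswap)

lemma sswap_mult: "sswap i (p * q) = sswap i p * sswap i q"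
proof -
  let ?t = "\<lambda>f m. Poly_Mapping.single m (Poly_Mapping.lookup f m)"
  have expand: "p * q = (\<Sum>a\<in>Poly_Mapping.keys p. \<Sum>b\<in>Poly_Mapping.keys q. ?t p a * ?t q b)"
    by (subst (1) sum_single_lookup[symmetric, of p], subst (1) sum_single_lookup[symmetric, of q])
      (simp add: sum_product)
  have "sswap i (p * q) =
      (\<Sum>a\<in>Poly_Mapping.keys p. \<Sum>b\<in>Poly_Mapping.keys q. sswap i (?t p a) * sswap i (?t q b))"
    unfolding expand sswap_sum by (simp add: mult_single sswap_single mswap_add)
  also have "\<dots> = sswap i p * sswap i q"
    by (subst (3) sum_single_lookup[symmetric, of p], subst (3) sum_single_lookup[symmetric, of q])
      (simp add: sum_product sswap_sum)
  finally show ?thesis .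
qed

lemma sswap_Var: "sswap i (Var k) = Var (adj i k)"
  by (simp add: Var_def sswap_single mswap_single)

lemma Var_diff_Suc_neq_zero: "Var i - Var (Suc i) \<noteq> 0"
proof
  assume "Var i - Var (Suc i) = 0"
  then have "Poly_Mapping.single i (1::nat) = Poly_Mapping.single (Suc i) 1"
    unfolding Var_def by (metis eq_iff_diff_eq_0 lookup_single_eq lookup_single_not_eq zero_neq_one)
  then show False
    by (metis lookup_single_eq lookup_single_not_eq n_not_Suc_n zero_neq_one)
qed

definition update_exps :: "nat \<Rightarrow> (nat \<Rightarrow>\<^sub>0 nat) \<Rightarrow> nat \<Rightarrow> nat \<Rightarrow> (nat \<Rightarrow>\<^sub>0 nat)" where
  "update_exps i m x y = Poly_Mapping.update i x (Poly_Mapping.update (Suc i) y m)"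

lemma lookup_update_exps:
  "Poly_Mapping.lookup (update_exps i m x y) k =
     (if k = i then x else if k = Suc i then y else Poly_Mapping.lookup m k)"
  by (simp add: update_exps_def Poly_Mapping.lookup_update)

lemma update_exps_lookup_self:
  "update_exps i m (Poly_Mapping.lookup m i) (Poly_Mapping.lookup m (Suc i)) = m"
  by (rule poly_mapping_eqI) (auto simp: lookup_update_exps)

lemma mswap_eq_update_exps:
  "mswap i m = update_exps i m (Poly_Mapping.lookup m (Suc i)) (Poly_Mapping.lookup m i)"
  by (rule poly_mapping_eqI) (auto simp: lookup_update_exps lookup_mswap transpose_def)

lemma Var_power: "Var k ^ e = monom (Poly_Mapping.single k e)"
  by (induction e) (simp_all add: Var_def mult_single single_add[symmetric])

lemma prod_monom: "finite A \<Longrightarrow> (\<Prod>i\<in>A. monom (g i)) = monom (\<Sum>i\<in>A. g i)"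
  by (induction A rule: finite_induct) (simp_all add: mult_single)

lemma monom_update_exps:
  "monom (update_exps i m x y) = monom (update_exps i m 0 0) * Var i ^ x * Var (Suc i) ^ y"
proof -
  have "update_exps i m x y = update_exps i m 0 0 + Poly_Mapping.single i x + Poly_Mapping.single (Suc i) y"
    by (rule poly_mapping_eqI) (auto simp: lookup_update_exps lookup_add lookup_single when_def)
  then show ?thesis
    by (simp add: mult_single Var_power)
qed

text \<open>For \<open>r \<le> s\<close>, \<open>ddiff_chain i m r s\<close> is the quotient of
  \<open>x\<^sub>i\<^sup>s x\<^bsub>i+1\<^esub>\<^sup>r - x\<^sub>i\<^sup>r x\<^bsub>i+1\<^esub>\<^sup>s\<close> by \<open>x\<^sub>i - x\<^bsub>i+1\<^esub>\<close>,
  all other exponents being those of \<open>m\<close>.\<close>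

definition ddiff_chain :: "nat \<Rightarrow> (nat \<Rightarrow>\<^sub>0 nat) \<Rightarrow> nat \<Rightarrow> nat \<Rightarrow> mpoly" where
  "ddiff_chain i m r s = (\<Sum>j<s - r. monom (update_exps i m (r + j) (s - Suc j)))"

lemma Var_diff_mult_ddiff_chain:
  assumes "r \<le> s"
  shows "(Var i - Var (Suc i)) * ddiff_chain i m r s =
    monom (update_exps i m s r) - monom (update_exps i m r s)"
proof -
  define U a b d where "U = monom (update_exps i m 0 0)" and "a = Var i"
    and "b = Var (Suc i)" and "d = s - r"
  have s: "s = r + d"
    using assms by (simp add: d_def)
  have "ddiff_chain i m r s = (\<Sum>j<d. U * (a * b) ^ r * (a ^ j * b ^ (d - Suc j)))"
    unfolding ddiff_chain_def d_def[symmetric]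
  proof (rule sum.cong)
    fix j assume "j \<in> {..<d}"
    then have "s - Suc j = r + (d - Suc j)"
      by (simp add: s)
    then show "monom (update_exps i m (r + j) (s - Suc j)) = U * (a * b) ^ r * (a ^ j * b ^ (d - Suc j))"
      unfolding monom_update_exps[of i m "r + j"] U_def[symmetric] a_def[symmetric] b_def[symmetric]
      by (simp add: power_add power_mult_distrib mult_ac)
  qed simp
  also have "\<dots> = U * (a * b) ^ r * (\<Sum>j<d. b ^ (d - Suc j) * a ^ j)"
    by (simp add: sum_distrib_left mult_ac)
  finally have "(a - b) * ddiff_chain i m r s = U * (a * b) ^ r * (a ^ d - b ^ d)"
    by (simp add: power_diff_sumr2 mult_ac)
  also have "\<dots> = U * a ^ s * b ^ r - U * a ^ r * b ^ s"
    by (simp add: s power_add power_mult_distrib right_diff_distrib mult_ac)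
  finally show ?thesis
    unfolding monom_update_exps[of i m s] monom_update_exps[of i m r] U_def a_def b_def .
qed

definition ddiff_monom :: "nat \<Rightarrow> (nat \<Rightarrow>\<^sub>0 nat) \<Rightarrow> mpoly" where
  "ddiff_monom i m =
    (let p = Poly_Mapping.lookup m i; q = Poly_Mapping.lookup m (Suc i)
     in if q \<le> p then ddiff_chain i m q p else - ddiff_chain i m p q)"

lemma Var_diff_mult_ddiff_monom:
  "(Var i - Var (Suc i)) * ddiff_monom i m = monom m - monom (mswap i m)"
  by (auto simp: ddiff_monom_def Let_def Var_diff_mult_ddiff_chain mswap_eq_update_exps
      update_exps_lookup_self)

lemma of_int_mult_monom: "of_int c * monom m = Poly_Mapping.single m c"
  by (simp add: single_of_int[symmetric] mult_single del: single_of_int)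

lemma Var_diff_mult_sum_ddiff_monom:
  "(Var i - Var (Suc i)) * (\<Sum>m\<in>Poly_Mapping.keys f. of_int (Poly_Mapping.lookup f m) * ddiff_monom i m)
     = f - sswap i f"
proof -
  have "of_int (Poly_Mapping.lookup f m) * ((Var i - Var (Suc i)) * ddiff_monom i m)
      = Poly_Mapping.single m (Poly_Mapping.lookup f m)
        - Poly_Mapping.single (mswap i m) (Poly_Mapping.lookup f m)" for m
    by (simp only: Var_diff_mult_ddiff_monom right_diff_distrib of_int_mult_monom)
  then have "(Var i - Var (Suc i)) * (\<Sum>m\<in>Poly_Mapping.keys f. of_int (Poly_Mapping.lookup f m) * ddiff_monom i m)
      = (\<Sum>m\<in>Poly_Mapping.keys f. Poly_Mapping.single m (Poly_Mapping.lookup f m))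
        - (\<Sum>m\<in>Poly_Mapping.keys f. Poly_Mapping.single (mswap i m) (Poly_Mapping.lookup f m))"
    by (simp add: sum_distrib_left mult.left_commute sum_subtractf)
  then show ?thesis
    by (simp add: sum_single_lookup sswap_def)
qed

lemma Var_diff_mult_cancel: "(Var i - Var (Suc i)) * p = (Var i - Var (Suc i)) * q \<longleftrightarrow> p = q"
  by (rule mult_left_cancel[OF Var_diff_Suc_neq_zero])

lemma ddiff_eq_sum:
  "ddiff i f = (\<Sum>m\<in>Poly_Mapping.keys f. of_int (Poly_Mapping.lookup f m) * ddiff_monom i m)"
  unfolding ddiff_def
proof (rule the_equality)
  fix q
  assume "(Var i - Var (Suc i)) * q = f - sswap i f"
  then show "q = (\<Sum>m\<in>Poly_Mapping.keys f. of_int (Poly_Mapping.lookup f m) * ddiff_monom i m)"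
    by (simp only: Var_diff_mult_cancel flip: Var_diff_mult_sum_ddiff_monom)
qed (rule Var_diff_mult_sum_ddiff_monom)

lemma Var_diff_mult_ddiff: "(Var i - Var (Suc i)) * ddiff i f = f - sswap i f"
  by (simp add: ddiff_eq_sum Var_diff_mult_sum_ddiff_monom)

lemma sswap_ddiff [simp]: "sswap i (ddiff i f) = ddiff i f"
proof -
  have "(Var (Suc i) - Var i) * sswap i (ddiff i f) = sswap i f - f"
    using arg_cong[OF Var_diff_mult_ddiff[of i f], of "sswap i"]
    by (simp add: sswap_mult sswap_diff sswap_Var)
  then have "(Var i - Var (Suc i)) * sswap i (ddiff i f) = (Var i - Var (Suc i)) * ddiff i f"
    using Var_diff_mult_ddiff[of i f] by algebra
  then show ?thesis
    by (simp only: Var_diff_mult_cancel)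
qed

lemma ddiff_ddiff: "ddiff i (ddiff i f) = 0"
  using Var_diff_mult_ddiff[of i "ddiff i f"] Var_diff_mult_cancel[of i _ 0] by simp

text \<open>Both sides of the commutation and braid relations are identified by multiplying with
  the product of the relevant \<open>x\<^sub>a - x\<^sub>b\<close> and expanding each divided difference
  by \<open>Var_diff_mult_ddiff\<close>: both products are the same alternating sum of
  permuted copies of \<open>f\<close>.\<close>

lemma ddiff_commute:
  assumes "Suc (Suc i) \<le> j"
  shows "ddiff i (ddiff j f) = ddiff j (ddiff i f)"
proof -
  define A C where "A = Var i - Var (Suc i)" and "C = Var j - Var (Suc j)"
  have sA: "sswap j A = A" and sC: "sswap i C = C"
    using assms by (auto simp: A_def C_def sswap_diff sswap_Var transpose_def)
  have swap_commute: "sswap i (sswap j f) = sswap j (sswap i f)"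
    using assms by (intro poly_mapping_eqI) (metis lookup_sswap mswap_commute)
  have ij: "A * ddiff i g = g - sswap i g" and ji: "C * ddiff j g = g - sswap j g" for g
    by (simp_all add: A_def C_def Var_diff_mult_ddiff)
  have "C * sswap i (ddiff j f) = sswap i f - sswap i (sswap j f)"
    using arg_cong[OF ji[of f], of "sswap i"] by (simp add: sswap_mult sswap_diff sC)
  moreover have "A * sswap j (ddiff i f) = sswap j f - sswap j (sswap i f)"
    using arg_cong[OF ij[of f], of "sswap j"] by (simp add: sswap_mult sswap_diff sA)
  ultimately have "(A * C) * ddiff i (ddiff j f) = (A * C) * ddiff j (ddiff i f)"
    using ij[of "ddiff j f"] ij[of f] ji[of "ddiff i f"] ji[of f] swap_commute by algebra
  moreover have "A * C \<noteq> 0"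
    using Var_diff_Suc_neq_zero by (simp add: A_def C_def)
  ultimately show ?thesis
    by simp
qed

definition vandermonde3 :: "nat \<Rightarrow> mpoly" where
  "vandermonde3 i =
    (Var i - Var (Suc i)) * (Var i - Var (Suc (Suc i))) * (Var (Suc i) - Var (Suc (Suc i)))"

lemma vandermonde3_neq_zero: "vandermonde3 i \<noteq> 0"
proof -
  have "Var i - Var (Suc (Suc i)) \<noteq> 0"
  proof
    assume "Var i - Var (Suc (Suc i)) = 0"
    then have "sswap (Suc i) (Var i - Var (Suc (Suc i))) = 0"
      by simp
    then show False
      using Var_diff_Suc_neq_zero[of i] by (simp add: sswap_diff sswap_Var)
  qed
  then show ?thesis
    using Var_diff_Suc_neq_zero by (simp add: vandermonde3_def)
qed

lemma vandermonde3_mult_ddiff_iji: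
  "vandermonde3 i * ddiff i (ddiff (Suc i) (ddiff i f)) =
    f - sswap i f - sswap (Suc i) f + sswap (Suc i) (sswap i f) + sswap i (sswap (Suc i) f)
      - sswap i (sswap (Suc i) (sswap i f))"
proof -
  define a b c where "a = Var i" and "b = Var (Suc i)" and "c = Var (Suc (Suc i))"
  let ?s = "sswap i" and ?t = "sswap (Suc i)"
  have sa: "?s a = b" "?s b = a" "?s c = c" and ta: "?t a = a" "?t b = c" "?t c = b"
    by (simp_all add: a_def b_def c_def sswap_Var)
  have K: "(a - b) * ddiff i g = g - ?s g" and L: "(b - c) * ddiff (Suc i) g = g - ?t g" for g
    by (simp_all add: a_def b_def c_def Var_diff_mult_ddiff)
  define g1 g2 where "g1 = ddiff i f" and "g2 = ddiff (Suc i) g1"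
  have tg1: "(a - c) * ?t g1 = ?t f - ?t (?s f)"
    using arg_cong[OF K[of f], of ?t] by (simp add: g1_def sswap_mult sswap_diff ta)
  moreover have "(b - c) * ?s (?t g1) = ?s (?t f) - ?s (?t (?s f))"
    using arg_cong[OF tg1, of ?s] by (simp add: sswap_mult sswap_diff sa)
  moreover have "(a - c) * ?s g2 = g1 - ?s (?t g1)"
    using arg_cong[OF L[of g1], of ?s] by (simp add: g1_def g2_def sswap_mult sswap_diff sa)
  ultimately have "((a - b) * (a - c) * (b - c)) * ddiff i g2 =
      f - ?s f - ?t f + ?t (?s f) + ?s (?t f) - ?s (?t (?s f))"
    using K[of f] L[of g1] K[of g2] by (simp add: g1_def g2_def) algebra
  then show ?thesis
    by (simp add: vandermonde3_def a_def b_def c_def g1_def g2_def)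
qed

lemma vandermonde3_mult_ddiff_jij:
  "vandermonde3 i * ddiff (Suc i) (ddiff i (ddiff (Suc i) f)) =
    f - sswap i f - sswap (Suc i) f + sswap (Suc i) (sswap i f) + sswap i (sswap (Suc i) f)
      - sswap (Suc i) (sswap i (sswap (Suc i) f))"
proof -
  define a b c where "a = Var i" and "b = Var (Suc i)" and "c = Var (Suc (Suc i))"
  let ?s = "sswap i" and ?t = "sswap (Suc i)"
  have sa: "?s a = b" "?s b = a" "?s c = c" and ta: "?t a = a" "?t b = c" "?t c = b"
    by (simp_all add: a_def b_def c_def sswap_Var)
  have K: "(a - b) * ddiff i g = g - ?s g" and L: "(b - c) * ddiff (Suc i) g = g - ?t g" for g
    by (simp_all add: a_def b_def c_def Var_diff_mult_ddiff)
  define h1 h2 where "h1 = ddiff (Suc i) f" and "h2 = ddiff i h1"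
  have sh1: "(a - c) * ?s h1 = ?s f - ?s (?t f)"
    using arg_cong[OF L[of f], of ?s] by (simp add: h1_def sswap_mult sswap_diff sa)
  moreover have "(a - b) * ?t (?s h1) = ?t (?s f) - ?t (?s (?t f))"
    using arg_cong[OF sh1, of ?t] by (simp add: sswap_mult sswap_diff ta)
  moreover have "(a - c) * ?t h2 = h1 - ?t (?s h1)"
    using arg_cong[OF K[of h1], of ?t] by (simp add: h1_def h2_def sswap_mult sswap_diff ta)
  ultimately have "((a - b) * (a - c) * (b - c)) * ddiff (Suc i) h2 =
      f - ?s f - ?t f + ?t (?s f) + ?s (?t f) - ?t (?s (?t f))"
    using L[of f] K[of h1] L[of h2] by (simp add: h1_def h2_def) algebra
  then show ?thesis
    by (simp add: vandermonde3_def a_def b_def c_def h1_def h2_def)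
qed

lemma ddiff_braid:
  "ddiff i (ddiff (Suc i) (ddiff i f)) = ddiff (Suc i) (ddiff i (ddiff (Suc i) f))"
proof -
  have "sswap i (sswap (Suc i) (sswap i f)) = sswap (Suc i) (sswap i (sswap (Suc i) f))"
    by (rule poly_mapping_eqI) (simp add: lookup_sswap mswap_braid)
  then have "vandermonde3 i * ddiff i (ddiff (Suc i) (ddiff i f)) =
      vandermonde3 i * ddiff (Suc i) (ddiff i (ddiff (Suc i) f))"
    by (simp only: vandermonde3_mult_ddiff_iji vandermonde3_mult_ddiff_jij)
  then show ?thesis
    using vandermonde3_neq_zero by simp
qed

section \<open>Length and Lehmer code under adjacent transpositions\<close>

lemma permutes_comp_adj:
  assumes "w permutes {1..n}" "1 \<le> i" "i < n"
  shows "(w \<circ> adj i) permutes {1..n}"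
  using assms by (intro permutes_compose permutes_swap_id) auto

lemma comp_adj_adj [simp]: "w \<circ> adj i \<circ> adj i = w"
  by (simp add: fun_eq_iff)

definition inversions :: "nat \<Rightarrow> (nat \<Rightarrow> nat) \<Rightarrow> (nat \<times> nat) set" where
  "inversions n w = {(i, j). 1 \<le> i \<and> i < j \<and> j \<le> n \<and> w j < w i}"

lemma perm_length_eq_card_inversions: "perm_length n w = card (inversions n w)"
  by (simp add: perm_length_def inversions_def)

lemma inversions_subset: "inversions n w \<subseteq> {1..n} \<times> {1..n}"
  by (auto simp: inversions_def)

lemma perm_length_le: "perm_length n w \<le> n * n"
  using card_mono[OF _ inversions_subset, of n w]
  by (simp add: perm_length_eq_card_inversions card_cartesian_product)

lemma mem_inversions_comp_adj:
  assumes "1 \<le> i" "i < n" "w i < w (Suc i)"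
  shows "(p, q) \<in> inversions n (w \<circ> adj i) \<longleftrightarrow>
    (p, q) = (i, Suc i) \<or> (adj i p, adj i q) \<in> inversions n w"
  using assms by (auto simp: inversions_def transpose_def)

lemma perm_length_comp_adj_ascent:
  assumes "1 \<le> i" "i < n" "w i < w (Suc i)"
  shows "perm_length n (w \<circ> adj i) = Suc (perm_length n w)"
proof -
  define \<psi> where "\<psi> = map_prod (adj i) (adj i)"
  have \<psi>_\<psi>: "\<psi> (\<psi> x) = x" for x
    by (cases x) (simp add: \<psi>_def)
  then have "inj \<psi>"
    by (metis injI)
  have "inversions n (w \<circ> adj i) = insert (i, Suc i) (\<psi> -` inversions n w)"
    using mem_inversions_comp_adj[OF assms] by (auto simp: \<psi>_def)
  also have "\<psi> -` inversions n w = \<psi> ` inversions n w"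
    by (rule set_eqI) (metis \<psi>_\<psi> image_iff vimage_eq)
  finally have eq: "inversions n (w \<circ> adj i) = insert (i, Suc i) (\<psi> ` inversions n w)" .
  have "(i, Suc i) \<notin> \<psi> ` inversions n w"
    by (auto simp: \<psi>_def inversions_def transpose_def split: if_splits)
  moreover have "card (\<psi> ` inversions n w) = card (inversions n w)"
    using \<open>inj \<psi>\<close> by (simp add: card_image inj_on_subset)
  ultimately show ?thesis
    using finite_subset[OF inversions_subset]
    by (simp add: eq perm_length_eq_card_inversions)
qed

lemma perm_length_comp_adj_descent:
  assumes "w permutes {1..n}" "1 \<le> i" "i < n" "\<not> w i < w (Suc i)"
  shows "perm_length n w = Suc (perm_length n (w \<circ> adj i))"
proof -
  have "w (Suc i) \<noteq> w i"
    using permutes_inj[OF assms(1)] by (simp add: inj_eq)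
  then have "(w \<circ> adj i) i < (w \<circ> adj i) (Suc i)"
    using assms(4) by simp
  from perm_length_comp_adj_ascent[OF assms(2,3) this] show ?thesis
    by (simp only: comp_adj_adj)
qed

lemma lehmer_comp_adj_at:
  assumes "i < n" "w i < w (Suc i)"
  shows "lehmer n (w \<circ> adj i) i = Suc (lehmer n w (Suc i))"
proof -
  have "{j. i < j \<and> j \<le> n \<and> (w \<circ> adj i) j < (w \<circ> adj i) i} =
      insert (Suc i) {j. Suc i < j \<and> j \<le> n \<and> w j < w (Suc i)}"
    using assms by (auto simp: transpose_def)
  then show ?thesis
    by (simp add: lehmer_def)
qed

lemma lehmer_comp_adj_Suc:
  assumes "w i < w (Suc i)"
  shows "lehmer n (w \<circ> adj i) (Suc i) = lehmer n w i"
proof -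
  have "{j. Suc i < j \<and> j \<le> n \<and> (w \<circ> adj i) j < (w \<circ> adj i) (Suc i)} = {j. i < j \<and> j \<le> n \<and> w j < w i}"
    using assms by (auto simp: transpose_def)
  then show ?thesis
    by (simp add: lehmer_def)
qed

lemma lehmer_comp_adj_other:
  assumes "Suc i \<le> n" "k \<noteq> i" "k \<noteq> Suc i"
  shows "lehmer n (w \<circ> adj i) k = lehmer n w k"
proof -
  define J where "J = {j. k < j \<and> j \<le> n \<and> w j < w k}"
  have "k < adj i j \<and> adj i j \<le> n \<longleftrightarrow> k < j \<and> j \<le> n" for j
    using assms by (cases "j = i \<or> j = Suc i") (auto simp: transpose_def)
  moreover have "adj i k = k"
    using assms by simp
  ultimately have "{j. k < j \<and> j \<le> n \<and> (w \<circ> adj i) j < (w \<circ> adj i) k} = adj i -` J"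
    by (auto simp: J_def)
  also have "\<dots> = adj i ` J"
    by (simp add: bij_vimage_eq_inv_image inv_swap_id)
  finally show ?thesis
    by (simp add: lehmer_def J_def card_image)
qed

lemma lehmer_beyond: "n < k \<Longrightarrow> lehmer n w k = 0"
  by (simp add: lehmer_def)

lemma lehmer_zero: "w permutes {1..n} \<Longrightarrow> lehmer n w 0 = 0"
  using permutes_not_in[of w "{1..n}" 0] by (simp add: lehmer_def)

lemma decreasing_gap:
  fixes w :: "nat \<Rightarrow> nat"
  assumes dec: "\<And>k. a \<le> k \<Longrightarrow> k < n \<Longrightarrow> w (Suc k) < w k"
  assumes "a \<le> k" "k \<le> j" "j \<le> n"
  shows "w j + (j - k) \<le> w k"
  using assms(3,4)
proof (induction j)
  case (Suc j)
  show ?case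
  proof (cases "k = Suc j")
    case False
    then have "k \<le> j"
      using Suc.prems by simp
    moreover have "w (Suc j) < w j"
      using dec[of j] \<open>k \<le> j\<close> assms(2) Suc.prems by simp
    ultimately show ?thesis
      using Suc by simp
  qed simp
qed simp

lemma lehmer_decreasing:
  fixes w :: "nat \<Rightarrow> nat"
  assumes dec: "\<And>k. a \<le> k \<Longrightarrow> k < n \<Longrightarrow> w (Suc k) < w k"
  assumes "a \<le> k"
  shows "lehmer n w k = n - k"
proof -
  have "w j < w k" if "k < j" "j \<le> n" for j
    using decreasing_gap[where w = w and a = a and n = n and k = k and j = j] dec assms(2) that by simp
  then have "{j. k < j \<and> j \<le> n \<and> w j < w k} = {k<..n}"
    by auto
  then show ?thesis
    by (simp add: lehmer_def)
qed

lemma longest_longest [simp]: "longest n (longest n x) = x"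
  by (auto simp: longest_def)

lemma longest_permutes: "longest n permutes {1..n}"
  unfolding permutes_def
proof (intro conjI allI impI)
  show "\<exists>!x. longest n x = y" for y
    by (metis longest_longest)
qed (auto simp: longest_def)

lemma lehmer_longest: "lehmer n (longest n) k = (if 1 \<le> k then n - k else 0)"
proof (cases "1 \<le> k")
  case True
  have "lehmer n (longest n) k = n - k"
    by (rule lehmer_decreasing[of 1]) (use True in \<open>auto simp: longest_def\<close>)
  then show ?thesis
    using True by simp
next
  case False
  then show ?thesis
    using lehmer_zero[OF longest_permutes, of n] by (simp add: not_less_eq_eq)
qed

definition is_ascent :: "nat \<Rightarrow> (nat \<Rightarrow> nat) \<Rightarrow> nat \<Rightarrow> bool" where
  "is_ascent n w j \<longleftrightarrow> 1 \<le> j \<and> j < n \<and> w j < w (Suc j)"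

lemma obtain_last_ascent:
  assumes "\<exists>j. is_ascent n w j"
  obtains r where "is_ascent n w r" "\<And>k. r < k \<Longrightarrow> \<not> is_ascent n w k"
proof -
  have fin: "finite {j. is_ascent n w j}"
    by (rule finite_subset[of _ "{..<n}"]) (auto simp: is_ascent_def)
  have "is_ascent n w (Max {j. is_ascent n w j})"
    using Max_in[OF fin] assms by auto
  moreover have "\<not> is_ascent n w k" if "Max {j. is_ascent n w j} < k" for k
    using Max_ge[OF fin, of k] that by auto
  ultimately show ?thesis
    using that by blast
qed

lemma longest_no_ascent: "\<not> is_ascent n (longest n) j"
  by (auto simp: is_ascent_def longest_def Suc_diff_le)

lemma no_ascent_imp_longest:
  assumes w: "w permutes {1..n}" and no_asc: "\<And>j. \<not> is_ascent n w j"
  shows "w = longest n"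
proof
  fix k
  have dec: "w (Suc j) < w j" if "1 \<le> j" "j < n" for j
  proof -
    have "w (Suc j) \<noteq> w j"
      using permutes_inj[OF w] by (simp add: inj_eq)
    then show ?thesis
      using no_asc[of j] that by (auto simp: is_ascent_def)
  qed
  have range: "1 \<le> w j \<and> w j \<le> n" if "1 \<le> j" "j \<le> n" for j
    using permutes_in_image[OF w, of j] that by auto
  show "w k = longest n k"
  proof (cases "1 \<le> k \<and> k \<le> n")
    case True
    have "w n + (n - k) \<le> w k" and "w k + (k - 1) \<le> w 1"
      using decreasing_gap[where w = w and a = 1 and n = n and k = k and j = n]
        decreasing_gap[where w = w and a = 1 and n = n and k = 1 and j = k] dec True by auto
    then have "w k = n + 1 - k"
      using True range[of n] range[of 1] by linarith
    with True show ?thesis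
      by (simp add: longest_def)
  next
    case False
    then show ?thesis
      using permutes_not_in[OF w, of k] by (auto simp: longest_def)
  qed
qed

section \<open>Schubert polynomials are well defined\<close>

lemma perm_length_comp_adj_is_ascent:
  "is_ascent n w i \<Longrightarrow> perm_length n (w \<circ> adj i) = Suc (perm_length n w)"
  by (simp add: is_ascent_def perm_length_comp_adj_ascent)

lemma permutes_comp_adj_is_ascent:
  "w permutes {1..n} \<Longrightarrow> is_ascent n w i \<Longrightarrow> (w \<circ> adj i) permutes {1..n}"
  unfolding is_ascent_def by (blast intro: permutes_comp_adj)

text \<open>The inductive step showing that the recursion along the least ascent also holds at
  every other ascent; it reduces to the commutation and braid relations.\<close>

lemma ascent_recursion_commute:
  fixes S :: "(nat \<Rightarrow> nat) \<Rightarrow> mpoly"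
  assumes rec: "\<And>u k. u permutes {1..n} \<Longrightarrow> is_ascent n u k \<Longrightarrow> perm_length n v < perm_length n u \<Longrightarrow>
      S u = ddiff k (S (u \<circ> adj k))"
    and v: "v permutes {1..n}" and j: "is_ascent n v j" and i: "is_ascent n v i" and "Suc j < i"
  shows "ddiff j (S (v \<circ> adj j)) = ddiff i (S (v \<circ> adj i))"
proof -
  have "is_ascent n (v \<circ> adj j) i" and "is_ascent n (v \<circ> adj i) j"
    using i j \<open>Suc j < i\<close> by (auto simp: is_ascent_def transpose_def)
  then have "S (v \<circ> adj j) = ddiff i (S (v \<circ> adj j \<circ> adj i))"
    and "S (v \<circ> adj i) = ddiff j (S (v \<circ> adj i \<circ> adj j))"
    using rec permutes_comp_adj_is_ascent[OF v] perm_length_comp_adj_is_ascent i j by simp_all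
  moreover have "v \<circ> adj j \<circ> adj i = v \<circ> adj i \<circ> adj j"
    using \<open>Suc j < i\<close> by (auto simp: fun_eq_iff transpose_def)
  ultimately show ?thesis
    using ddiff_commute[of j i] \<open>Suc j < i\<close> by simp
qed

lemma ascent_recursion_braid:
  fixes S :: "(nat \<Rightarrow> nat) \<Rightarrow> mpoly"
  assumes rec: "\<And>u k. u permutes {1..n} \<Longrightarrow> is_ascent n u k \<Longrightarrow> perm_length n v < perm_length n u \<Longrightarrow>
      S u = ddiff k (S (u \<circ> adj k))"
    and v: "v permutes {1..n}" and j: "is_ascent n v j" and j': "is_ascent n v (Suc j)"
  shows "ddiff j (S (v \<circ> adj j)) = ddiff (Suc j) (S (v \<circ> adj (Suc j)))"
proof -
  define v1 v2 u1 u2 where "v1 = v \<circ> adj j" and "v2 = v1 \<circ> adj (Suc j)"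
    and "u1 = v \<circ> adj (Suc j)" and "u2 = u1 \<circ> adj j"
  have asc: "is_ascent n v1 (Suc j)" "is_ascent n v2 j" "is_ascent n u1 j" "is_ascent n u2 (Suc j)"
    using j j' by (auto simp: is_ascent_def transpose_def v1_def v2_def u1_def u2_def)
  have perm: "v1 permutes {1..n}" "v2 permutes {1..n}" "u1 permutes {1..n}" "u2 permutes {1..n}"
    using permutes_comp_adj_is_ascent v j j' asc by (simp_all add: v1_def v2_def u1_def u2_def)
  have len: "perm_length n v < perm_length n v1" "perm_length n v < perm_length n v2"
      "perm_length n v < perm_length n u1" "perm_length n v < perm_length n u2"
    using perm_length_comp_adj_is_ascent j j' asc by (simp_all add: v1_def v2_def u1_def u2_def)
  have "v2 \<circ> adj j = u2 \<circ> adj (Suc j)"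
    by (auto simp: fun_eq_iff transpose_def v1_def v2_def u1_def u2_def)
  then have "ddiff j (ddiff (Suc j) (ddiff j (S (v2 \<circ> adj j)))) =
      ddiff (Suc j) (ddiff j (ddiff (Suc j) (S (u2 \<circ> adj (Suc j)))))"
    using ddiff_braid by simp
  then show ?thesis
    using rec[OF perm(1) asc(1) len(1)] rec[OF perm(2) asc(2) len(2)]
      rec[OF perm(3) asc(3) len(3)] rec[OF perm(4) asc(4) len(4)]
    by (simp add: v1_def v2_def u1_def u2_def)
qed

function schubert_rec :: "nat \<Rightarrow> (nat \<Rightarrow> nat) \<Rightarrow> mpoly" where
  "schubert_rec n w =
    (if w permutes {1..n} then
      (if \<exists>j. is_ascent n w j
       then ddiff (LEAST j. is_ascent n w j) (schubert_rec n (w \<circ> adj (LEAST j. is_ascent n w j)))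
       else (\<Prod>i\<in>{1..n}. Var i ^ (n - i)))
     else 0)"
  by auto
termination
proof (relation "measure (\<lambda>(n, w). n * n - perm_length n w)")
  fix n w
  assume "\<exists>j. is_ascent n w j"
  then have "perm_length n (w \<circ> adj (LEAST j. is_ascent n w j)) = Suc (perm_length n w)"
    by (metis LeastI_ex perm_length_comp_adj_is_ascent)
  then show "((n, w \<circ> adj (LEAST j. is_ascent n w j)), n, w) \<in> measure (\<lambda>(n, w). n * n - perm_length n w)"
    using perm_length_le[of n "w \<circ> adj (LEAST j. is_ascent n w j)"] by simp
qed simp

declare schubert_rec.simps [simp del]

lemma schubert_rec_longest: "schubert_rec n (longest n) = (\<Prod>i\<in>{1..n}. Var i ^ (n - i))"
  using longest_permutes longest_no_ascent by (subst schubert_rec.simps) auto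

lemma schubert_rec_ascent:
  assumes "v permutes {1..n}" "is_ascent n v i"
  shows "schubert_rec n v = ddiff i (schubert_rec n (v \<circ> adj i))"
  using assms
proof (induction "n * n - perm_length n v" arbitrary: v i rule: less_induct)
  case less
  define j where "j = (LEAST j. is_ascent n v j)"
  have j: "is_ascent n v j" and "j \<le> i"
    unfolding j_def
    by (rule LeastI[of "is_ascent n v", OF less.prems(2)], rule Least_le[of "is_ascent n v", OF less.prems(2)])
  have least: "schubert_rec n v = ddiff j (schubert_rec n (v \<circ> adj j))"
    using less.prems by (subst schubert_rec.simps) (auto simp: j_def)
  have rec: "schubert_rec n u = ddiff k (schubert_rec n (u \<circ> adj k))"
    if "u permutes {1..n}" "is_ascent n u k" "perm_length n v < perm_length n u" for u k
    using less.hyps[OF _ that(1,2)] that(3) perm_length_le[of n u] by simp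
  consider "j = i" | "Suc j < i" | "i = Suc j"
    using \<open>j \<le> i\<close> by linarith
  then show ?case
  proof cases
    case 2
    have "ddiff j (schubert_rec n (v \<circ> adj j)) = ddiff i (schubert_rec n (v \<circ> adj i))"
      by (rule ascent_recursion_commute[OF rec less.prems(1) j less.prems(2) 2])
    then show ?thesis
      using least by simp
  next
    case 3
    have "ddiff j (schubert_rec n (v \<circ> adj j)) = ddiff (Suc j) (schubert_rec n (v \<circ> adj (Suc j)))"
      by (rule ascent_recursion_braid[OF rec less.prems(1) j]) (use less.prems(2) 3 in simp_all)
    then show ?thesis
      using least 3 by simp
  qed (use least in simp)
qed

lemma schubert_rec_ddiff:
  assumes w: "w permutes {1..n}" and "1 \<le> i" "i < n"
  shows "ddiff i (schubert_rec n w) =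
    (if perm_length n (w \<circ> adj i) + 1 = perm_length n w then schubert_rec n (w \<circ> adj i) else 0)"
proof (cases "w i < w (Suc i)")
  case True
  then have "is_ascent n w i"
    using assms by (simp add: is_ascent_def)
  then have "ddiff i (schubert_rec n w) = 0"
    by (simp only: schubert_rec_ascent[OF w, of i] ddiff_ddiff)
  then show ?thesis
    using perm_length_comp_adj_ascent[OF assms(2,3) True] by simp
next
  case False
  have "w (Suc i) \<noteq> w i"
    using permutes_inj[OF w] by (simp add: inj_eq)
  then have "is_ascent n (w \<circ> adj i) i"
    using False assms by (simp add: is_ascent_def)
  from schubert_rec_ascent[OF permutes_comp_adj[OF assms] this]
  have "schubert_rec n (w \<circ> adj i) = ddiff i (schubert_rec n w)"
    by (simp only: comp_adj_adj)
  then show ?thesis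
    using perm_length_comp_adj_descent[OF assms False] by simp
qed

lemma schubert_family_schubert_rec: "schubert_family n (schubert_rec n)"
  by (simp add: schubert_family_def schubert_rec_longest schubert_rec_ddiff)

lemma schubert_family_unique:
  assumes S: "schubert_family n S" and w: "w permutes {1..n}"
  shows "S w = schubert_rec n w"
  using w
proof (induction "n * n - perm_length n w" arbitrary: w rule: less_induct)
  case less
  show ?case
  proof (cases "\<exists>j. is_ascent n w j")
    case True
    then obtain j where j: "is_ascent n w j"
      by blast
    have u: "(w \<circ> adj j) permutes {1..n}"
      by (rule permutes_comp_adj_is_ascent[OF less.prems j])
    have len: "perm_length n (w \<circ> adj j) = Suc (perm_length n w)"
      by (rule perm_length_comp_adj_is_ascent[OF j])
    have "S w = ddiff j (S (w \<circ> adj j))"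
      using S u j len unfolding schubert_family_def is_ascent_def by simp
    moreover have "S (w \<circ> adj j) = schubert_rec n (w \<circ> adj j)"
      using less.hyps[OF _ u] len perm_length_le[of n "w \<circ> adj j"] by simp
    ultimately show ?thesis
      using schubert_rec_ascent[OF less.prems j] by simp
  next
    case False
    then show ?thesis
      using no_ascent_imp_longest[OF less.prems] S schubert_rec_longest
      by (simp add: schubert_family_def)
  qed
qed

lemma schubert_eq_schubert_rec:
  assumes "w permutes {1..n}"
  shows "schubert n w = schubert_rec n w"
  unfolding schubert_def
  using schubert_family_schubert_rec schubert_family_unique[OF _ assms] by blast

section \<open>Leading monomials\<close>

definition rlex_less :: "('a::linorder \<Rightarrow>\<^sub>0 nat) \<Rightarrow> ('a \<Rightarrow>\<^sub>0 nat) \<Rightarrow> bool" where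
  "rlex_less c d \<longleftrightarrow> (\<exists>p. Poly_Mapping.lookup c p < Poly_Mapping.lookup d p \<and>
      (\<forall>k>p. Poly_Mapping.lookup c k = Poly_Mapping.lookup d k))"

definition rlex_le :: "('a::linorder \<Rightarrow>\<^sub>0 nat) \<Rightarrow> ('a \<Rightarrow>\<^sub>0 nat) \<Rightarrow> bool" where
  "rlex_le c d \<longleftrightarrow> c = d \<or> rlex_less c d"

lemma rlex_lessI:
  "Poly_Mapping.lookup c p < Poly_Mapping.lookup d p \<Longrightarrow>
    (\<And>k. p < k \<Longrightarrow> Poly_Mapping.lookup c k = Poly_Mapping.lookup d k) \<Longrightarrow> rlex_less c d"
  unfolding rlex_less_def by blast

lemma rlex_less_irrefl: "\<not> rlex_less c c"
  by (auto simp: rlex_less_def)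

lemma rlex_less_trans:
  assumes "rlex_less a b" "rlex_less b c"
  shows "rlex_less a c"
proof -
  obtain p where p: "Poly_Mapping.lookup a p < Poly_Mapping.lookup b p"
    "\<forall>k>p. Poly_Mapping.lookup a k = Poly_Mapping.lookup b k"
    using assms(1) by (auto simp: rlex_less_def)
  obtain q where q: "Poly_Mapping.lookup b q < Poly_Mapping.lookup c q"
    "\<forall>k>q. Poly_Mapping.lookup b k = Poly_Mapping.lookup c k"
    using assms(2) by (auto simp: rlex_less_def)
  show ?thesis
    unfolding rlex_less_def
  proof (cases p q rule: linorder_cases)
    case less
    then show "\<exists>r. Poly_Mapping.lookup a r < Poly_Mapping.lookup c r \<and>
        (\<forall>k>r. Poly_Mapping.lookup a k = Poly_Mapping.lookup c k)"
      using p q by (intro exI[of _ q]) auto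
  qed (use p q in \<open>auto intro!: exI[of _ p]\<close>)
qed

lemma rlex_le_trans: "rlex_le a b \<Longrightarrow> rlex_le b c \<Longrightarrow> rlex_le a c"
  unfolding rlex_le_def using rlex_less_trans by blast

lemma rlex_less_le_trans: "rlex_less a b \<Longrightarrow> rlex_le b c \<Longrightarrow> rlex_less a c"
  unfolding rlex_le_def using rlex_less_trans by blast

lemma rlex_le_antisym: "rlex_le a b \<Longrightarrow> rlex_le b a \<Longrightarrow> a = b"
  unfolding rlex_le_def using rlex_less_trans rlex_less_irrefl by blast

lemma rlex_less_add_right: "rlex_less c d \<Longrightarrow> rlex_less (c + e) (d + e)"
  unfolding rlex_less_def by (auto simp: lookup_add)

lemma rlex_le_add_right: "rlex_le c d \<Longrightarrow> rlex_le (c + e) (d + e)"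
  unfolding rlex_le_def using rlex_less_add_right by blast

lemma rlex_le_add_left: "rlex_le c d \<Longrightarrow> rlex_le (e + c) (e + d)"
  using rlex_le_add_right[of c d e] by (simp add: add.commute)

definition is_lead_exp :: "mpoly \<Rightarrow> (nat \<Rightarrow>\<^sub>0 nat) \<Rightarrow> bool" where
  "is_lead_exp f a \<longleftrightarrow> Poly_Mapping.lookup f a \<noteq> 0 \<and> (\<forall>m\<in>Poly_Mapping.keys f. rlex_le m a)"

lemma is_lead_exp_unique: "is_lead_exp f a \<Longrightarrow> is_lead_exp f b \<Longrightarrow> a = b"
  unfolding is_lead_exp_def by (meson in_keys_iff rlex_le_antisym)

lemma lookup_mult_keys:
  "Poly_Mapping.lookup (f * g) t = (\<Sum>x\<in>Poly_Mapping.keys f. \<Sum>y\<in>Poly_Mapping.keys g.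
      if x + y = t then Poly_Mapping.lookup f x * Poly_Mapping.lookup g y else 0)"
proof -
  have "f * g = (\<Sum>x\<in>Poly_Mapping.keys f. \<Sum>y\<in>Poly_Mapping.keys g.
      Poly_Mapping.single (x + y) (Poly_Mapping.lookup f x * Poly_Mapping.lookup g y))"
    by (subst (1) sum_single_lookup[symmetric, of f], subst (1) sum_single_lookup[symmetric, of g])
      (simp add: sum_product mult_single)
  then show ?thesis
    by (simp add: lookup_sum lookup_single when_def)
qed

lemma is_lead_exp_mult:
  assumes f: "is_lead_exp f a" and g: "is_lead_exp g b"
  shows "is_lead_exp (f * g) (a + b)"
    and "Poly_Mapping.lookup (f * g) (a + b) = Poly_Mapping.lookup f a * Poly_Mapping.lookup g b"
proof -
  have le: "rlex_le (x + y) (a + b)" if "x \<in> Poly_Mapping.keys f" "y \<in> Poly_Mapping.keys g" for x y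
    using rlex_le_add_right[of x a y] rlex_le_add_left[of y b a] that f g
    by (auto simp: is_lead_exp_def intro: rlex_le_trans)
  have only: "x = a \<and> y = b"
    if "x \<in> Poly_Mapping.keys f" "y \<in> Poly_Mapping.keys g" "x + y = a + b" for x y
  proof -
    have "\<not> rlex_less x a"
      using rlex_less_le_trans[OF rlex_less_add_right[of x a y] rlex_le_add_left[of y b a]]
        that g rlex_less_irrefl by (auto simp: is_lead_exp_def)
    then have "x = a"
      using that(1) f by (auto simp: is_lead_exp_def rlex_le_def)
    then show ?thesis
      using that(3) by simp
  qed
  have "Poly_Mapping.lookup (f * g) (a + b) = (\<Sum>x\<in>Poly_Mapping.keys f. \<Sum>y\<in>Poly_Mapping.keys g.
      if x = a \<and> y = b then Poly_Mapping.lookup f x * Poly_Mapping.lookup g y else 0)"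
    unfolding lookup_mult_keys by (intro sum.cong refl) (use only in auto)
  also have "\<dots> = (\<Sum>x\<in>Poly_Mapping.keys f.
      if x = a then Poly_Mapping.lookup f x * Poly_Mapping.lookup g b else 0)"
    using g by (intro sum.cong refl) (simp add: is_lead_exp_def in_keys_iff)
  also have "\<dots> = Poly_Mapping.lookup f a * Poly_Mapping.lookup g b"
    using f by (simp add: is_lead_exp_def in_keys_iff)
  finally show lookup: "Poly_Mapping.lookup (f * g) (a + b) = Poly_Mapping.lookup f a * Poly_Mapping.lookup g b" .
  show "is_lead_exp (f * g) (a + b)"
    using f g le keys_mult[of f g] by (auto simp: is_lead_exp_def lookup)
qed

lemma is_lead_exp_prod:
  assumes "finite K" "\<And>k. k \<in> K \<Longrightarrow> is_lead_exp (f k) (a k)"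
  shows "is_lead_exp (\<Prod>k\<in>K. f k) (\<Sum>k\<in>K. a k)"
  using assms
proof (induction K rule: finite_induct)
  case empty
  then show ?case
    by (simp add: is_lead_exp_def rlex_le_def)
next
  case (insert x K)
  then show ?case
    using is_lead_exp_mult(1)[of "f x" "a x" "prod f K" "sum a K"] by simp
qed

section \<open>The leading monomial of a Schubert polynomial\<close>

lemma keys_ddiff_chain:
  assumes "c' \<in> Poly_Mapping.keys (ddiff_chain i m r s)"
  obtains j where "j < s - r" "c' = update_exps i m (r + j) (s - Suc j)"
  using assms keys_sum[of "\<lambda>j. monom (update_exps i m (r + j) (s - Suc j))" "{..<s - r}"]
  by (auto simp: ddiff_chain_def)

lemma keys_ddiff_monom:
  assumes "c' \<in> Poly_Mapping.keys (ddiff_monom i c)"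
  obtains x y where "c' = update_exps i c x y"
    and "x + y + 1 = Poly_Mapping.lookup c i + Poly_Mapping.lookup c (Suc i)"
    and "x < max (Poly_Mapping.lookup c i) (Poly_Mapping.lookup c (Suc i))"
    and "y < max (Poly_Mapping.lookup c i) (Poly_Mapping.lookup c (Suc i))"
proof -
  define p q where "p = Poly_Mapping.lookup c i" and "q = Poly_Mapping.lookup c (Suc i)"
  consider "q \<le> p" "c' \<in> Poly_Mapping.keys (ddiff_chain i c q p)"
    | "p < q" "c' \<in> Poly_Mapping.keys (ddiff_chain i c p q)"
    using assms by (auto simp: ddiff_monom_def p_def q_def Let_def split: if_splits)
  then show ?thesis
  proof cases
    case 1
    with that show ?thesis
      by (elim keys_ddiff_chain) (auto simp: p_def q_def)
  next
    case 2
    with that show ?thesis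
      by (elim keys_ddiff_chain) (auto simp: p_def q_def)
  qed
qed

definition ddiff_lead_exp :: "nat \<Rightarrow> (nat \<Rightarrow>\<^sub>0 nat) \<Rightarrow> (nat \<Rightarrow>\<^sub>0 nat)" where
  "ddiff_lead_exp i b = update_exps i b (Poly_Mapping.lookup b (Suc i)) (Poly_Mapping.lookup b i - 1)"

lemma lookup_ddiff_monom_lead_exp:
  assumes "Poly_Mapping.lookup c (Suc i) < Poly_Mapping.lookup c i"
  shows "Poly_Mapping.lookup (ddiff_monom i c) (ddiff_lead_exp i c) = 1"
proof -
  define p q where "p = Poly_Mapping.lookup c i" and "q = Poly_Mapping.lookup c (Suc i)"
  have eq: "update_exps i c (q + j) (p - Suc j) = ddiff_lead_exp i c \<longleftrightarrow> j = 0" for j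
  proof
    assume "update_exps i c (q + j) (p - Suc j) = ddiff_lead_exp i c"
    then have "Poly_Mapping.lookup (update_exps i c (q + j) (p - Suc j)) i =
        Poly_Mapping.lookup (ddiff_lead_exp i c) i"
      by simp
    then show "j = 0"
      by (simp add: ddiff_lead_exp_def lookup_update_exps q_def)
  qed (simp add: ddiff_lead_exp_def p_def q_def)
  have summand: "Poly_Mapping.lookup (monom (update_exps i c (q + j) (p - Suc j))) (ddiff_lead_exp i c) =
      (if j = 0 then 1 else 0)" for j
    using eq[of j] by (auto simp: lookup_single when_def)
  have "ddiff_monom i c = (\<Sum>j<p - q. monom (update_exps i c (q + j) (p - Suc j)))"
    using assms by (simp add: ddiff_monom_def ddiff_chain_def p_def q_def Let_def)
  then have "Poly_Mapping.lookup (ddiff_monom i c) (ddiff_lead_exp i c) = (\<Sum>j<p - q. if j = 0 then 1 else 0)"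
    by (simp only: lookup_sum summand)
  then show ?thesis
    using assms by (simp add: p_def q_def)
qed

lemma lookup_of_int_mult: "Poly_Mapping.lookup (of_int a * (g::mpoly)) t = a * Poly_Mapping.lookup g t"
proof -
  have "of_int a * g = Poly_Mapping.map ((*) a) g"
    by (simp add: mult_map_scale_conv_mult single_of_int[symmetric] del: single_of_int)
  then show ?thesis
    by (simp add: Poly_Mapping.map.rep_eq when_def)
qed

lemma lookup_ddiff:
  "Poly_Mapping.lookup (ddiff i f) t =
    (\<Sum>c\<in>Poly_Mapping.keys f. Poly_Mapping.lookup f c * Poly_Mapping.lookup (ddiff_monom i c) t)"
  by (simp add: ddiff_eq_sum lookup_sum lookup_of_int_mult)

lemma keys_ddiff:
  assumes "c' \<in> Poly_Mapping.keys (ddiff i f)"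
  obtains c where "c \<in> Poly_Mapping.keys f" "c' \<in> Poly_Mapping.keys (ddiff_monom i c)"
  using assms by (auto simp: in_keys_iff lookup_ddiff elim: sum.not_neutral_contains_not_neutral)

text \<open>In the application \<open>D\<close> is the exponent vector \<open>(n - 1, n - 2, \<dots>, 0)\<close> of the
  top Schubert polynomial, which bounds every exponent of every Schubert polynomial.\<close>

lemma keys_ddiff_monom_bounded:
  fixes D :: "nat \<Rightarrow> nat"
  assumes c: "\<And>k. Poly_Mapping.lookup c k \<le> D k" and D: "D r = Suc (D (Suc r))"
    and c': "c' \<in> Poly_Mapping.keys (ddiff_monom r c)"
  shows "Poly_Mapping.lookup c' k \<le> D k"
proof -
  obtain x y where xy: "c' = update_exps r c x y"
    "x < max (Poly_Mapping.lookup c r) (Poly_Mapping.lookup c (Suc r))"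
    "y < max (Poly_Mapping.lookup c r) (Poly_Mapping.lookup c (Suc r))"
    using keys_ddiff_monom[OF c'] by metis
  have "max (Poly_Mapping.lookup c r) (Poly_Mapping.lookup c (Suc r)) \<le> D r"
    using c[of r] c[of "Suc r"] D by simp
  then have "x \<le> D r" "y \<le> D (Suc r)"
    using xy D by linarith+
  then show ?thesis
    using c[of k] by (simp add: xy(1) lookup_update_exps)
qed

lemma keys_ddiff_monom_rlex_le:
  assumes b: "Poly_Mapping.lookup b (Suc r) < Poly_Mapping.lookup b r"
    and c': "c' \<in> Poly_Mapping.keys (ddiff_monom r b)"
  shows "rlex_le c' (ddiff_lead_exp r b)"
proof -
  obtain x y where xy: "c' = update_exps r b x y"
    "x + y + 1 = Poly_Mapping.lookup b r + Poly_Mapping.lookup b (Suc r)"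
    "y < max (Poly_Mapping.lookup b r) (Poly_Mapping.lookup b (Suc r))"
    using keys_ddiff_monom[OF c'] by metis
  show ?thesis
  proof (cases "y < Poly_Mapping.lookup b r - 1")
    case True
    then have "rlex_less c' (ddiff_lead_exp r b)"
      unfolding rlex_less_def
      by (intro exI[of _ "Suc r"]) (simp add: xy(1) ddiff_lead_exp_def lookup_update_exps)
    then show ?thesis
      by (simp add: rlex_le_def)
  next
    case False
    then have "y = Poly_Mapping.lookup b r - 1" "x = Poly_Mapping.lookup b (Suc r)"
      using b xy by auto
    then show ?thesis
      by (simp add: rlex_le_def xy(1) ddiff_lead_exp_def)
  qed
qed

lemma rlex_less_update_exps_shift:
  assumes "rlex_less c b" "Poly_Mapping.lookup c r = Poly_Mapping.lookup b r"
  shows "rlex_less (update_exps r c (Poly_Mapping.lookup c (Suc r)) y)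
    (update_exps r b (Poly_Mapping.lookup b (Suc r)) y)"
proof -
  obtain p where p: "Poly_Mapping.lookup c p < Poly_Mapping.lookup b p"
    "\<And>k. p < k \<Longrightarrow> Poly_Mapping.lookup c k = Poly_Mapping.lookup b k"
    using assms(1) unfolding rlex_less_def by blast
  have "p \<noteq> r"
    using p(1) assms(2) by auto
  then consider "Suc r < p" | "p = Suc r" | "p < r"
    by linarith
  then show ?thesis
  proof cases
    case 2
    then show ?thesis
      using p by (intro rlex_lessI[of _ r]) (auto simp: lookup_update_exps)
  qed (intro rlex_lessI[of _ p]; use p in \<open>auto simp: lookup_update_exps\<close>)+
qed

lemma keys_ddiff_monom_rlex_less:
  fixes D :: "nat \<Rightarrow> nat"
  assumes less: "rlex_less c b" and c: "\<And>k. Poly_Mapping.lookup c k \<le> D k"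
    and D: "D r = Suc (D (Suc r))"
    and b_top: "Poly_Mapping.lookup b r = D r" "\<And>k. Suc (Suc r) \<le> k \<Longrightarrow> Poly_Mapping.lookup b k = D k"
    and c': "c' \<in> Poly_Mapping.keys (ddiff_monom r c)"
  shows "rlex_less c' (ddiff_lead_exp r b)"
proof -
  let ?c = "Poly_Mapping.lookup c" and ?b = "Poly_Mapping.lookup b"
  obtain x y where c'_eq: "c' = update_exps r c x y" and xy: "x + y + 1 = ?c r + ?c (Suc r)"
    "y < max (?c r) (?c (Suc r))"
    using keys_ddiff_monom[OF c'] by metis
  have max: "max (?c r) (?c (Suc r)) \<le> D r"
    using c[of r] c[of "Suc r"] D by simp
  consider "y < D r - 1" | "y = D r - 1"
    using xy(2) max by linarith
  then show ?thesis
  proof cases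
    case 1
    obtain p where p: "?c p < ?b p" "\<And>k. p < k \<Longrightarrow> ?c k = ?b k"
      using less unfolding rlex_less_def by blast
    show ?thesis
    proof (cases "Suc (Suc r) \<le> p")
      case True
      then show ?thesis
        using p by (intro rlex_lessI[of _ p]) (auto simp: c'_eq ddiff_lead_exp_def lookup_update_exps)
    next
      case False
      then show ?thesis
        using 1 p(2) b_top
        by (intro rlex_lessI[of _ "Suc r"]) (auto simp: c'_eq ddiff_lead_exp_def lookup_update_exps)
    qed
  next
    case 2
    \<comment> \<open>the maximal choice of \<open>y\<close> forces \<open>c\<close> to be maximal at \<open>r\<close>, and then \<open>x = c (r + 1)\<close>\<close>
    have "?c r = D r"
      using 2 xy(2) max c[of "Suc r"] D by (simp add: max_def split: if_splits)
    moreover from this have "x = ?c (Suc r)"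
      using xy(1) 2 D by simp
    ultimately show ?thesis
      using rlex_less_update_exps_shift[OF less, of r "D r - 1"] 2 b_top(1)
      by (simp add: c'_eq ddiff_lead_exp_def)
  qed
qed

lemma is_lead_exp_ddiff:
  fixes D :: "nat \<Rightarrow> nat"
  assumes lead: "is_lead_exp f b" "Poly_Mapping.lookup f b = 1"
    and bounded: "\<And>m k. m \<in> Poly_Mapping.keys f \<Longrightarrow> Poly_Mapping.lookup m k \<le> D k"
    and D: "D r = Suc (D (Suc r))"
    and b_top: "Poly_Mapping.lookup b r = D r" "\<And>k. Suc (Suc r) \<le> k \<Longrightarrow> Poly_Mapping.lookup b k = D k"
    and b_desc: "Poly_Mapping.lookup b (Suc r) < Poly_Mapping.lookup b r"
  shows "is_lead_exp (ddiff r f) (ddiff_lead_exp r b)"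
    and "Poly_Mapping.lookup (ddiff r f) (ddiff_lead_exp r b) = 1"
    and "\<And>m k. m \<in> Poly_Mapping.keys (ddiff r f) \<Longrightarrow> Poly_Mapping.lookup m k \<le> D k"
proof -
  have below: "rlex_less c b" if "c \<in> Poly_Mapping.keys f" "c \<noteq> b" for c
    using lead that by (auto simp: is_lead_exp_def rlex_le_def)
  have "Poly_Mapping.lookup (ddiff_monom r c) (ddiff_lead_exp r b) = 0"
    if "c \<in> Poly_Mapping.keys f" "c \<noteq> b" for c
    using keys_ddiff_monom_rlex_less[OF below[OF that] bounded[OF that(1)] D b_top]
      rlex_less_irrefl by (auto simp: in_keys_iff)
  then have "Poly_Mapping.lookup (ddiff r f) (ddiff_lead_exp r b) =
      (\<Sum>c\<in>Poly_Mapping.keys f. if c = b then 1 else 0)"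
    unfolding lookup_ddiff
    using lead(2) lookup_ddiff_monom_lead_exp[OF b_desc] by (intro sum.cong) auto
  also have "\<dots> = 1"
    using lead(2) by (simp add: in_keys_iff)
  finally show lookup: "Poly_Mapping.lookup (ddiff r f) (ddiff_lead_exp r b) = 1" .
  have "rlex_le c' (ddiff_lead_exp r b)" if c': "c' \<in> Poly_Mapping.keys (ddiff r f)" for c'
  proof -
    obtain c where c: "c \<in> Poly_Mapping.keys f" "c' \<in> Poly_Mapping.keys (ddiff_monom r c)"
      using keys_ddiff[OF c'] by blast
    show ?thesis
    proof (cases "c = b")
      case True
      then show ?thesis
        using keys_ddiff_monom_rlex_le[OF b_desc] c by simp
    next
      case False
      then show ?thesis
        using keys_ddiff_monom_rlex_less[OF below[OF c(1) False] bounded[OF c(1)] D b_top c(2)]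
        by (simp add: rlex_le_def)
    qed
  qed
  then show "is_lead_exp (ddiff r f) (ddiff_lead_exp r b)"
    using lookup by (simp add: is_lead_exp_def)
  show "Poly_Mapping.lookup m k \<le> D k" if "m \<in> Poly_Mapping.keys (ddiff r f)" for m k
    using keys_ddiff[OF that] keys_ddiff_monom_bounded[OF bounded D] by metis
qed

definition code_exp :: "nat \<Rightarrow> (nat \<Rightarrow> nat) \<Rightarrow> (nat \<Rightarrow>\<^sub>0 nat)" where
  "code_exp n w = Abs_poly_mapping (lehmer n w)"

lemma lookup_code_exp: "Poly_Mapping.lookup (code_exp n w) = lehmer n w"
proof -
  have "{k. lehmer n w k \<noteq> 0} \<subseteq> {..n}"
  proof
    fix k
    assume "k \<in> {k. lehmer n w k \<noteq> 0}"
    then show "k \<in> {..n}"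
      using lehmer_beyond[of n k w] by (cases "n < k") auto
  qed
  then have "finite {k. lehmer n w k \<noteq> 0}"
    by (rule finite_subset) simp
  then show ?thesis
    by (simp add: code_exp_def)
qed

lemma monom_code_exp_longest: "monom (code_exp n (longest n)) = (\<Prod>i\<in>{1..n}. Var i ^ (n - i))"
proof -
  have "code_exp n (longest n) = (\<Sum>i\<in>{1..n}. Poly_Mapping.single i (n - i))"
    by (rule poly_mapping_eqI)
      (simp add: lookup_code_exp lehmer_longest lookup_sum lookup_single when_def)
  then show ?thesis
    by (simp add: Var_power prod_monom)
qed

lemma lehmer_after_last_ascent:
  assumes w: "w permutes {1..n}" and last: "\<And>k. r < k \<Longrightarrow> \<not> is_ascent n w k"
    and "Suc r \<le> k"
  shows "lehmer n w k = n - k"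
proof -
  have dec: "w (Suc j) < w j" if "Suc r \<le> j" "j < n" for j
  proof -
    have "w (Suc j) \<noteq> w j"
      using permutes_inj[OF w] by (simp add: inj_eq)
    then show ?thesis
      using last[of j] that by (auto simp: is_ascent_def)
  qed
  show ?thesis
    using lehmer_decreasing[where a = "Suc r" and n = n and w = w and k = k, OF dec assms(3)] .
qed

lemma lehmer_ascent_less:
  assumes "is_ascent n w r"
  shows "lehmer n w r < n - r"
proof -
  have "{j. r < j \<and> j \<le> n \<and> w j < w r} \<subseteq> {Suc (Suc r)..n}"
  proof
    fix j
    assume j: "j \<in> {j. r < j \<and> j \<le> n \<and> w j < w r}"
    then have "j \<noteq> Suc r"
      using assms by (auto simp: is_ascent_def)
    with j show "j \<in> {Suc (Suc r)..n}"
      by auto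
  qed
  then have "lehmer n w r \<le> n - Suc r"
    using card_mono[of "{Suc (Suc r)..n}"] by (simp add: lehmer_def)
  then show ?thesis
    using assms unfolding is_ascent_def by linarith
qed

lemma lehmer_last_ascent:
  assumes w: "w permutes {1..n}" and r: "is_ascent n w r"
    and last: "\<And>k. r < k \<Longrightarrow> \<not> is_ascent n w k"
  shows "lehmer n (w \<circ> adj r) r = lehmer n (longest n) r"
    and "\<And>k. Suc (Suc r) \<le> k \<Longrightarrow> lehmer n (w \<circ> adj r) k = lehmer n (longest n) k"
    and "lehmer n (w \<circ> adj r) (Suc r) < lehmer n (w \<circ> adj r) r"
    and "code_exp n w = ddiff_lead_exp r (code_exp n (w \<circ> adj r))"
proof -
  define v where "v = w \<circ> adj r"
  have r': "1 \<le> r" "r < n" "w r < w (Suc r)"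
    using r by (auto simp: is_ascent_def)
  note tail = lehmer_after_last_ascent[where r = r, OF w last]
  have v_r: "lehmer n v r = n - r"
    using lehmer_comp_adj_at[OF r'(2,3)] tail[of "Suc r"] r' by (simp add: v_def)
  have v_Suc: "lehmer n v (Suc r) = lehmer n w r"
    using lehmer_comp_adj_Suc[OF r'(3)] by (simp add: v_def)
  have v_other: "lehmer n v k = lehmer n w k" if "k \<noteq> r" "k \<noteq> Suc r" for k
    using lehmer_comp_adj_other[of r n k w] that r' by (simp add: v_def)
  show "lehmer n (w \<circ> adj r) r = lehmer n (longest n) r"
    using v_r r' by (simp add: lehmer_longest v_def)
  show "lehmer n (w \<circ> adj r) k = lehmer n (longest n) k" if "Suc (Suc r) \<le> k" for k
    using v_other[of k] tail[of k] that by (simp add: lehmer_longest v_def)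
  show "lehmer n (w \<circ> adj r) (Suc r) < lehmer n (w \<circ> adj r) r"
    using v_r v_Suc lehmer_ascent_less[OF r] by (simp add: v_def)
  show "code_exp n w = ddiff_lead_exp r (code_exp n (w \<circ> adj r))"
    using v_r v_Suc v_other tail[of "Suc r"]
    by (intro poly_mapping_eqI) (simp add: ddiff_lead_exp_def lookup_update_exps lookup_code_exp v_def)
qed

lemma schubert_rec_lead_exp:
  assumes "w permutes {1..n}"
  shows "is_lead_exp (schubert_rec n w) (code_exp n w) \<and>
    Poly_Mapping.lookup (schubert_rec n w) (code_exp n w) = 1 \<and>
    (\<forall>m\<in>Poly_Mapping.keys (schubert_rec n w). \<forall>k. Poly_Mapping.lookup m k \<le> lehmer n (longest n) k)"
  using assms
proof (induction "n * n - perm_length n w" arbitrary: w rule: less_induct)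
  case less
  show ?case
  proof (cases "\<exists>j. is_ascent n w j")
    case False
    then have "w = longest n"
      using no_ascent_imp_longest[OF less.prems] by blast
    then have "schubert_rec n w = monom (code_exp n w)"
      by (simp add: schubert_rec_longest monom_code_exp_longest)
    then show ?thesis
      by (simp add: is_lead_exp_def rlex_le_def lookup_code_exp \<open>w = longest n\<close>)
  next
    case True
    then obtain r where r: "is_ascent n w r" and last: "\<And>k. r < k \<Longrightarrow> \<not> is_ascent n w k"
      using obtain_last_ascent by metis
    have "1 \<le> r" "r < n"
      using r by (auto simp: is_ascent_def)
    define v where "v = w \<circ> adj r"
    have "v permutes {1..n}" "perm_length n w < perm_length n v"
      using permutes_comp_adj_is_ascent[OF less.prems r] perm_length_comp_adj_is_ascent[OF r]
      by (simp_all add: v_def)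
    then have IH: "is_lead_exp (schubert_rec n v) (code_exp n v)"
      "Poly_Mapping.lookup (schubert_rec n v) (code_exp n v) = 1"
      "\<And>m k. m \<in> Poly_Mapping.keys (schubert_rec n v) \<Longrightarrow> Poly_Mapping.lookup m k \<le> lehmer n (longest n) k"
      using less.hyps[of v] perm_length_le[of n v] by auto
    note code = lehmer_last_ascent[OF less.prems r last, folded v_def]
    have D: "lehmer n (longest n) r = Suc (lehmer n (longest n) (Suc r))"
      using \<open>1 \<le> r\<close> \<open>r < n\<close> by (simp add: lehmer_longest)
    note step = is_lead_exp_ddiff[where D = "lehmer n (longest n)" and f = "schubert_rec n v"
        and b = "code_exp n v" and r = r, unfolded lookup_code_exp, OF IH D code(1,2,3)]
    have "schubert_rec n w = ddiff r (schubert_rec n v)"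
      using schubert_rec_ascent[OF less.prems r] by (simp add: v_def)
    then show ?thesis
      using step by (simp add: code(4))
  qed
qed

section \<open>Standard elementary monomials\<close>

definition exp_of_set :: "nat set \<Rightarrow> (nat \<Rightarrow>\<^sub>0 nat)" where
  "exp_of_set T = (\<Sum>t\<in>T. Poly_Mapping.single t 1)"

lemma lookup_exp_of_set: "finite T \<Longrightarrow> Poly_Mapping.lookup (exp_of_set T) x = (if x \<in> T then 1 else 0)"
  by (simp add: exp_of_set_def lookup_sum lookup_single when_def)

lemma exp_of_set_inj: "finite T \<Longrightarrow> finite T' \<Longrightarrow> exp_of_set T = exp_of_set T' \<Longrightarrow> T = T'"
  by (metis lookup_exp_of_set subsetI subset_antisym zero_neq_one)

lemma elem_eq_sum_monom: "elem k j = (\<Sum>T\<in>{T. T \<subseteq> {1..k} \<and> card T = j}. monom (exp_of_set T))"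
  unfolding elem_def exp_of_set_def Var_def
  by (intro sum.cong refl prod_monom) (auto intro: finite_subset)

lemma elem_eq_zero:
  assumes "k < j"
  shows "elem k j = 0"
proof -
  have "{T. T \<subseteq> {1..k} \<and> card T = j} = {}"
  proof (rule ccontr)
    assume "{T. T \<subseteq> {1..k} \<and> card T = j} \<noteq> {}"
    then obtain T where "T \<subseteq> {1..k}" "card T = j"
      by blast
    then show False
      using card_mono[of "{1..k}" T] assms by simp
  qed
  then show ?thesis
    unfolding elem_def by (simp only: sum.empty)
qed

lemma rlex_le_exp_of_set_top:
  assumes T: "T \<subseteq> {1..k}" "card T = j"
  shows "rlex_le (exp_of_set T) (exp_of_set {Suc k - j..k})"
proof (cases "T = {Suc k - j..k}")
  case False
  define T0 where "T0 = {Suc k - j..k}"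
  have fin: "finite T" "finite T0"
    using T(1) by (auto simp: T0_def intro: finite_subset)
  define p where "p = Max (sym_diff T T0)"
  have p: "p \<in> sym_diff T T0"
    unfolding p_def using False fin by (intro Max_in) (auto simp: T0_def)
  have above: "x \<in> T \<longleftrightarrow> x \<in> T0" if "p < x" for x
  proof -
    have "x \<notin> sym_diff T T0"
      using Max_ge[of "sym_diff T T0" x] fin that unfolding p_def by fastforce
    then show ?thesis
      by blast
  qed
  have "p \<in> T0 - T"
  proof (rule ccontr)
    assume "p \<notin> T0 - T"
    then have pT: "p \<in> T" "p \<notin> T0"
      using p by auto
    then have "p < Suc k - j"
      using T(1) by (auto simp: T0_def)
    then have "insert p T0 \<subseteq> T"
      using above pT by (auto simp: T0_def)
    then have "card (insert p T0) \<le> card T"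
      using fin by (intro card_mono)
    moreover have "card (insert p T0) = Suc j"
      using pT(2) T(1) card_mono[OF _ T(1)] T(2) by (simp add: T0_def)
    ultimately show False
      using T(2) by simp
  qed
  then have "rlex_less (exp_of_set T) (exp_of_set T0)"
    unfolding rlex_less_def using above fin by (intro exI[of _ p]) (simp add: lookup_exp_of_set)
  then show ?thesis
    by (simp add: rlex_le_def T0_def)
qed (simp add: rlex_le_def)

lemma is_lead_exp_elem:
  assumes "j \<le> k"
  shows "is_lead_exp (elem k j) (exp_of_set {Suc k - j..k})"
proof -
  define TT T0 where "TT = {T. T \<subseteq> {1..k} \<and> card T = j}" and "T0 = {Suc k - j..k}"
  have fin: "finite TT" "\<And>T. T \<in> TT \<Longrightarrow> finite T"
    by (auto simp: TT_def intro: finite_subset[of _ "Pow {1..k}"] finite_subset)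
  have T0: "T0 \<in> TT"
    using assms by (auto simp: TT_def T0_def)
  have "Poly_Mapping.lookup (elem k j) (exp_of_set T0) = (\<Sum>T\<in>TT. if T = T0 then 1 else 0)"
    unfolding elem_eq_sum_monom TT_def[symmetric] lookup_sum
    using exp_of_set_inj[OF fin(2) fin(2)[OF T0]] exp_of_set_inj[OF fin(2)[OF T0] fin(2)]
    by (intro sum.cong refl) (auto simp: lookup_single when_def)
  also have "\<dots> = 1"
    using fin(1) T0 by simp
  finally have "Poly_Mapping.lookup (elem k j) (exp_of_set T0) = 1" .
  moreover have "rlex_le m (exp_of_set T0)" if "m \<in> Poly_Mapping.keys (elem k j)" for m
  proof -
    have "m \<in> (\<Union>T\<in>TT. Poly_Mapping.keys (monom (exp_of_set T)))"
      using that keys_sum[of "\<lambda>T. monom (exp_of_set T)" TT]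
      unfolding elem_eq_sum_monom TT_def[symmetric] by blast
    then obtain T where "T \<in> TT" "m = exp_of_set T"
      by auto
    then show ?thesis
      using rlex_le_exp_of_set_top by (simp add: TT_def T0_def)
  qed
  ultimately show ?thesis
    by (simp add: is_lead_exp_def T0_def)
qed

lemma card_intervals_le_Suc:
  fixes a :: "nat \<Rightarrow> nat"
  assumes "finite A"
  shows "card {k\<in>A. i \<in> {Suc k - a k..k}} \<le> card {k\<in>A. Suc i \<in> {Suc k - a k..k}} + 1"
proof -
  have "{k\<in>A. i \<in> {Suc k - a k..k}} \<subseteq> insert i {k\<in>A. Suc i \<in> {Suc k - a k..k}}"
    by auto
  then have "card {k\<in>A. i \<in> {Suc k - a k..k}} \<le> card (insert i {k\<in>A. Suc i \<in> {Suc k - a k..k}})"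
    using assms by (intro card_mono) auto
  also have "\<dots> \<le> card {k\<in>A. Suc i \<in> {Suc k - a k..k}} + 1"
    by (simp add: card_insert_le_m1)
  finally show ?thesis .
qed

lemma std_elem_monomial_lead_exp_le:
  assumes "std_elem_monomial p" "is_lead_exp p c"
  shows "Poly_Mapping.lookup c i \<le> Poly_Mapping.lookup c (Suc i) + 1"
proof -
  obtain a :: "nat \<Rightarrow> nat" and K where p: "p = (\<Prod>k\<in>{1..K}. elem k (a k))"
    using assms(1) unfolding std_elem_monomial_def by blast
  have "a k \<le> k" if "k \<in> {1..K}" for k
  proof (rule ccontr)
    assume "\<not> a k \<le> k"
    then have "p = 0"
      using elem_eq_zero[of k "a k"] that by (auto simp: p intro: prod_zero)
    then show False
      using assms(2) by (simp add: is_lead_exp_def)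
  qed
  then have "is_lead_exp p (\<Sum>k\<in>{1..K}. exp_of_set {Suc k - a k..k})"
    unfolding p by (intro is_lead_exp_prod is_lead_exp_elem) auto
  then have "c = (\<Sum>k\<in>{1..K}. exp_of_set {Suc k - a k..k})"
    using is_lead_exp_unique assms(2) by blast
  then have "Poly_Mapping.lookup c x = card {k\<in>{1..K}. x \<in> {Suc k - a k..k}}" for x
    by (simp add: lookup_sum lookup_exp_of_set sum.If_cases Int_def conj_commute)
  then show ?thesis
    using card_intervals_le_Suc[of "{1..K}" i a] by simp
qed

theorem lemma14:
  fixes n :: nat and w :: "nat \<Rightarrow> nat" and i :: nat
  assumes "w permutes {1..n}"
    and "1 \<le> i" and "i < n"
    and "lehmer n w i \<ge> lehmer n w (Suc i) + 2"
  shows "\<not> std_elem_monomial (schubert n w)"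
proof
  assume "std_elem_monomial (schubert n w)"
  moreover have "is_lead_exp (schubert n w) (code_exp n w)"
    using schubert_rec_lead_exp[OF assms(1)] schubert_eq_schubert_rec[OF assms(1)] by simp
  ultimately have "lehmer n w i \<le> lehmer n w (Suc i) + 1"
    using std_elem_monomial_lead_exp_le by (fastforce simp: lookup_code_exp)
  with assms(4) show False
    by simp
qed

end
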